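(* Let $\mathbf{A}\in\mathbb{R}^{M\times N}$, $\mathbf{Y}\in\mathbb{R}^{M\times L}$, and let $\mathcal{S}_K=\{s_1<s_2<\dots<s_K\}\subseteq[N]$ with $K=|\mathcal{S}_K|\le N$. Let $\bar{\mathbf{A}}\in\mathbb{R}^{M\times K}$ be the submatrix of $\mathbf{A}$ consisting of the columns indexed by $\mathcal{S}_K$ (in this order). Let $(\bar{\mathbf{g}}(t),\bar{\mathbf{V}}(t))\in\mathbb{R}^K\times\mathbb{R}^{K\times L}$ follow the gradient flow of $\mathcal{L}_K(\bar{\mathbf{g}},\bar{\mathbf{V}})=\Vert\mathbf{Y}-\bar{\mathbf{A}}((\bar{\mathbf{g}}^{\odot2}\mathbf{1}_L)\odot\bar{\mathbf{V}})\Vert_F^2$. Define $\tilde{\mathbf{g}}(t)\in\mathbb{R}^N$ and $\tilde{\mathbf{V}}(t)\in\mathbb{R}^{N\times L}$ by $\tilde g_i(t)=\bar g_k(t)$ and $\tilde V_{il}(t)=\bar V_{kl}(t)$ if $i=s_k$ for some $k\in[K]$, and $\tilde g_i(t)=0$, $\tilde V_{il}(t)=0$ if $i\notin\mathcal{S}_K$. Then $(\tilde{\mathbf{g}}(t),\tilde{\mathbf{V}}(t))$ follows the gradient flow of $\mathcal{L}_N(\tilde{\mathbf{g}},\tilde{\mathbf{V}})=\Vert\mathbf{Y}-\mathbf{A}((\tilde{\mathbf{g}}^{\odot2}\mathbf{1}_L)\odot\tilde{\mathbf{V}})\Vert_F^2$, i.e., $$\frac{d}{dt}\tilde g_i(t)=-\frac{\partial\mathcal{L}_N}{\partial\tilde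 g_i}(\tilde{\mathbf g}(t),\tilde{\mathbf V}(t)),\qquad \frac{d}{dt}\tilde V_{il}(t)=-\frac{\partial\mathcal{L}_N}{\partial\tilde V_{il}}(\tilde{\mathbf g}(t),\tilde{\mathbf V}(t))$$ for all $i\in[N]$, $l\in[L]$.
   Context: $\odot$ is the entrywise product, $\mathbf{g}^{\odot2}$ the entrywise square, $\mathbf{1}_L$ the $1\times L$ all-ones row vector, so $((\mathbf g^{\odot 2}\mathbf 1_L)\odot\mathbf V)_{ij}=g_i^2V_{ij}$. Gradient flow of a loss $f$ means each coordinate's time derivative equals minus the corresponding partial derivative of $f$ along the curve. *)

theory Defs
  imports "HOL-Analysis.Analysis"
begin

text \<open>Matrices are functions nat => nat => real with explicit dimensions; indices are 0-based,
  so [N] is rendered as {..<N}.\<close>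

definition loss :: "nat \<Rightarrow> nat \<Rightarrow> nat \<Rightarrow> (nat \<Rightarrow> nat \<Rightarrow> real) \<Rightarrow> (nat \<Rightarrow> nat \<Rightarrow> real)
    \<Rightarrow> (nat \<Rightarrow> real) \<Rightarrow> (nat \<Rightarrow> nat \<Rightarrow> real) \<Rightarrow> real" where
  "loss M n L A Y g V =
     (\<Sum>m<M. \<Sum>l<L. (Y m l - (\<Sum>i<n. A m i * ((g i)\<^sup>2 * V i l)))\<^sup>2)"

definition partial_g :: "((nat \<Rightarrow> real) \<Rightarrow> (nat \<Rightarrow> nat \<Rightarrow> real) \<Rightarrow> real)
    \<Rightarrow> (nat \<Rightarrow> real) \<Rightarrow> (nat \<Rightarrow> nat \<Rightarrow> real) \<Rightarrow> nat \<Rightarrow> real" where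
  "partial_g f g V i = deriv (\<lambda>x. f (g(i := x)) V) (g i)"

definition partial_V :: "((nat \<Rightarrow> real) \<Rightarrow> (nat \<Rightarrow> nat \<Rightarrow> real) \<Rightarrow> real)
    \<Rightarrow> (nat \<Rightarrow> real) \<Rightarrow> (nat \<Rightarrow> nat \<Rightarrow> real) \<Rightarrow> nat \<Rightarrow> nat \<Rightarrow> real" where
  "partial_V f g V i l = deriv (\<lambda>x. f g (V(i := (V i)(l := x)))) (V i l)"

definition gradient_flow :: "nat \<Rightarrow> nat \<Rightarrow> ((nat \<Rightarrow> real) \<Rightarrow> (nat \<Rightarrow> nat \<Rightarrow> real) \<Rightarrow> real)
    \<Rightarrow> real set \<Rightarrow> (real \<Rightarrow> nat \<Rightarrow> real) \<Rightarrow> (real \<Rightarrow> nat \<Rightarrow> nat \<Rightarrow> real) \<Rightarrow> bool" where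
  "gradient_flow n L f T g V \<longleftrightarrow>
     (\<forall>t\<in>T.
        (\<forall>i<n. ((\<lambda>s. g s i) has_real_derivative - partial_g f (g t) (V t) i) (at t within T)) \<and>
        (\<forall>i<n. \<forall>l<L. ((\<lambda>s. V s i l) has_real_derivative - partial_V f (g t) (V t) i l)
                        (at t within T)))"

definition sel :: "nat set \<Rightarrow> nat \<Rightarrow> nat" where
  "sel S k = sorted_list_of_set S ! k"

definition submat :: "nat set \<Rightarrow> (nat \<Rightarrow> nat \<Rightarrow> real) \<Rightarrow> (nat \<Rightarrow> nat \<Rightarrow> real)" where
  "submat S A = (\<lambda>m k. A m (sel S k))"

definition embed_vec :: "nat set \<Rightarrow> (nat \<Rightarrow> real) \<Rightarrow> (nat \<Rightarrow> real)" where
  "embed_vec S g = (\<lambda>i. if \<exists>k<card S. i = sel S k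
                        then g (THE k. k < card S \<and> i = sel S k) else 0)"

definition embed_mat :: "nat set \<Rightarrow> (nat \<Rightarrow> nat \<Rightarrow> real) \<Rightarrow> (nat \<Rightarrow> nat \<Rightarrow> real)" where
  "embed_mat S V = (\<lambda>i l. if \<exists>k<card S. i = sel S k
                        then V (THE k. k < card S \<and> i = sel S k) l else 0)"

end

theory Submission
  imports Defs
begin

text \<open>Zero padding does not change the loss: a row i \<notin> S contributes A m i * (0 * 0).
  Varying a padded coordinate of index sel S k is varying coordinate k of the small problem,
  so the partial derivatives agree there. Varying g i for i \<notin> S leaves the loss
  unchanged because V i = 0, and varying V i l leaves it unchanged because g i = 0; so those
  partial derivatives vanish, as do the time derivatives of the padded coordinates.\<close>

lemma bij_betw_sel:
  assumes "finite S"
  shows "bij_betw (sel S) {..<card S} S"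
proof -
  let ?xs = "sorted_list_of_set S"
  have "distinct ?xs" "set ?xs = S" "length ?xs = card S"
    using assms by auto
  then show ?thesis
    unfolding bij_betw_def inj_on_def sel_def by (auto simp: nth_eq_iff_index_eq set_conv_nth)
qed

lemma sel_in:
  assumes "finite S" "k < card S"
  shows "sel S k \<in> S"
  using assms bij_betw_apply[OF bij_betw_sel] by blast

lemma sel_eq_sel_iff:
  assumes "finite S" "j < card S" "k < card S"
  shows "sel S j = sel S k \<longleftrightarrow> j = k"
  using assms bij_betw_imp_inj_on[OF bij_betw_sel[OF assms(1)]] by (auto simp: inj_on_def)

lemma sel_cases:
  assumes "finite S"
  obtains k where "k < card S" "i = sel S k" | "i \<notin> S"
  using assms bij_betw_imp_surj_on[OF bij_betw_sel[OF assms]] by blast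

lemma the_sel_eq:
  assumes "finite S" "k < card S"
  shows "(THE k'. k' < card S \<and> sel S k = sel S k') = k"
  using assms by (intro the_equality) (auto simp: sel_eq_sel_iff)

lemma embed_vec_sel:
  assumes "finite S" "k < card S"
  shows "embed_vec S g (sel S k) = g k"
  using assms the_sel_eq[OF assms] unfolding embed_vec_def by auto

lemma embed_mat_sel:
  assumes "finite S" "k < card S"
  shows "embed_mat S V (sel S k) = V k"
  using assms the_sel_eq[OF assms] unfolding embed_mat_def by (intro ext) auto

lemma embed_vec_notin:
  assumes "finite S" "i \<notin> S"
  shows "embed_vec S g i = 0"
proof -
  have "\<not> (\<exists>k<card S. i = sel S k)" using assms sel_in by blast
  then show ?thesis unfolding embed_vec_def by auto
qed

lemma embed_mat_notin:
  assumes "finite S" "i \<notin> S"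
  shows "embed_mat S V i = (\<lambda>l. 0)"
proof -
  have "\<not> (\<exists>k<card S. i = sel S k)" using assms sel_in by blast
  then show ?thesis unfolding embed_mat_def by (intro ext) auto
qed

lemma embed_vec_upd_sel:
  assumes "finite S" "k < card S"
  shows "embed_vec S (g(k := x)) = (embed_vec S g)(sel S k := x)"
proof
  fix i
  show "embed_vec S (g(k := x)) i = ((embed_vec S g)(sel S k := x)) i"
  proof (rule sel_cases[OF assms(1), of i])
    fix j assume "j < card S" "i = sel S j"
    with assms show ?thesis by (auto simp: embed_vec_sel sel_eq_sel_iff)
  next
    assume "i \<notin> S"
    moreover have "i \<noteq> sel S k" using \<open>i \<notin> S\<close> assms sel_in by blast
    ultimately show ?thesis using assms(1) by (simp add: embed_vec_notin)
  qed
qed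

lemma embed_mat_upd_sel:
  assumes "finite S" "k < card S"
  shows "embed_mat S (V(k := r)) = (embed_mat S V)(sel S k := r)"
proof
  fix i
  show "embed_mat S (V(k := r)) i = ((embed_mat S V)(sel S k := r)) i"
  proof (rule sel_cases[OF assms(1), of i])
    fix j assume "j < card S" "i = sel S j"
    with assms show ?thesis by (auto simp: embed_mat_sel sel_eq_sel_iff)
  next
    assume "i \<notin> S"
    moreover have "i \<noteq> sel S k" using \<open>i \<notin> S\<close> assms sel_in by blast
    ultimately show ?thesis using assms(1) by (simp add: embed_mat_notin)
  qed
qed

lemma loss_embed:
  assumes "S \<subseteq> {..<N}"
  shows "loss M N L A Y (embed_vec S g) (embed_mat S V) = loss M (card S) L (submat S A) Y g V"
proof -
  have fin: "finite S" using assms finite_subset by blast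
  have "(\<Sum>i<N. A m i * ((embed_vec S g i)\<^sup>2 * embed_mat S V i l))
      = (\<Sum>k<card S. A m (sel S k) * ((g k)\<^sup>2 * V k l))" for m l
  proof -
    let ?term = "\<lambda>i. A m i * ((embed_vec S g i)\<^sup>2 * embed_mat S V i l)"
    have "(\<Sum>i<N. ?term i) = (\<Sum>i\<in>S. ?term i)"
      using assms fin by (intro sum.mono_neutral_right) (auto simp: embed_vec_notin)
    also have "\<dots> = (\<Sum>k<card S. ?term (sel S k))"
      by (rule sum.reindex_bij_betw[OF bij_betw_sel[OF fin], symmetric])
    finally show ?thesis
      using fin by (simp add: embed_vec_sel embed_mat_sel)
  qed
  then show ?thesis
    unfolding loss_def submat_def by simp
qed

lemma loss_upd_g_zero_row:
  assumes "V i = (\<lambda>l. 0)"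
  shows "loss M n L A Y (g(i := x)) V = loss M n L A Y g V"
  unfolding loss_def using assms by (intro sum.cong refl arg_cong2[where f = "\<lambda>a b. (a - b)\<^sup>2"]) auto

lemma loss_upd_V_zero_weight:
  assumes "g i = 0"
  shows "loss M n L A Y g (V(i := r)) = loss M n L A Y g V"
  unfolding loss_def using assms by (intro sum.cong refl arg_cong2[where f = "\<lambda>a b. (a - b)\<^sup>2"]) auto

lemma partial_g_transfer:
  assumes "\<And>x. f (g(i := x)) V = f' (g'(j := x)) V'" "g i = g' j"
  shows "partial_g f g V i = partial_g f' g' V' j"
  unfolding partial_g_def using assms by simp

lemma partial_g_eq_0_if_const:
  assumes "\<And>x. f (g(i := x)) V = c"
  shows "partial_g f g V i = 0"
  unfolding partial_g_def using assms by simp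

lemma partial_V_transfer:
  assumes "\<And>x. f g (V(i := (V i)(l := x))) = f' g' (V'(j := (V' j)(l' := x)))"
    "V i l = V' j l'"
  shows "partial_V f g V i l = partial_V f' g' V' j l'"
  unfolding partial_V_def using assms by simp

lemma partial_V_eq_0_if_const:
  assumes "\<And>x. f g (V(i := (V i)(l := x))) = c"
  shows "partial_V f g V i l = 0"
  unfolding partial_V_def using assms by simp

lemma partial_g_loss_embed_sel:
  assumes "S \<subseteq> {..<N}" "k < card S"
  shows "partial_g (loss M N L A Y) (embed_vec S g) (embed_mat S V) (sel S k)
           = partial_g (loss M (card S) L (submat S A) Y) g V k"
proof -
  have fin: "finite S" using assms(1) finite_subset by blast
  show ?thesis
    using assms fin
    by (intro partial_g_transfer)
       (simp_all add: embed_vec_sel loss_embed flip: embed_vec_upd_sel)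
qed

lemma partial_V_loss_embed_sel:
  assumes "S \<subseteq> {..<N}" "k < card S"
  shows "partial_V (loss M N L A Y) (embed_vec S g) (embed_mat S V) (sel S k) l
           = partial_V (loss M (card S) L (submat S A) Y) g V k l"
proof -
  have fin: "finite S" using assms(1) finite_subset by blast
  show ?thesis
    using assms fin
    by (intro partial_V_transfer)
       (simp_all add: embed_mat_sel loss_embed flip: embed_mat_upd_sel)
qed

lemma partial_g_loss_embed_notin:
  assumes "finite S" "i \<notin> S"
  shows "partial_g (loss M N L A Y) (embed_vec S g) (embed_mat S V) i = 0"
  using assms by (intro partial_g_eq_0_if_const) (simp add: loss_upd_g_zero_row embed_mat_notin)

lemma partial_V_loss_embed_notin:
  assumes "finite S" "i \<notin> S"
  shows "partial_V (loss M N L A Y) (embed_vec S g) (embed_mat S V) i l = 0"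
  using assms by (intro partial_V_eq_0_if_const) (simp add: loss_upd_V_zero_weight embed_vec_notin)

theorem lemmaC1:
  fixes M N L :: nat
    and A Y :: "nat \<Rightarrow> nat \<Rightarrow> real"
    and S :: "nat set"
    and T :: "real set"
    and gbar :: "real \<Rightarrow> nat \<Rightarrow> real"
    and Vbar :: "real \<Rightarrow> nat \<Rightarrow> nat \<Rightarrow> real"
  assumes "S \<subseteq> {..<N}"
    and "gradient_flow (card S) L (loss M (card S) L (submat S A) Y) T gbar Vbar"
  shows "gradient_flow N L (loss M N L A Y) T
           (\<lambda>t. embed_vec S (gbar t)) (\<lambda>t. embed_mat S (Vbar t))"
proof -
  have fin: "finite S" using assms(1) finite_subset by blast
  show ?thesis
    unfolding gradient_flow_def
  proof (intro ballI allI impI conjI)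
    fix t i assume t: "t \<in> T"
    show "((\<lambda>s. embed_vec S (gbar s) i) has_real_derivative
        - partial_g (loss M N L A Y) (embed_vec S (gbar t)) (embed_mat S (Vbar t)) i) (at t within T)"
    proof (rule sel_cases[OF fin, of i])
      fix k assume "k < card S" "i = sel S k"
      with assms t fin show ?thesis
        by (simp add: gradient_flow_def embed_vec_sel partial_g_loss_embed_sel)
    qed (use fin in \<open>simp add: embed_vec_notin partial_g_loss_embed_notin\<close>)
  next
    fix t i l assume t: "t \<in> T" and "l < L"
    show "((\<lambda>s. embed_mat S (Vbar s) i l) has_real_derivative
        - partial_V (loss M N L A Y) (embed_vec S (gbar t)) (embed_mat S (Vbar t)) i l) (at t within T)"
    proof (rule sel_cases[OF fin, of i])
      fix k assume "k < card S" "i = sel S k"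
      with assms t \<open>l < L\<close> fin show ?thesis
        by (simp add: gradient_flow_def embed_mat_sel partial_V_loss_embed_sel)
    qed (use fin in \<open>simp add: embed_mat_notin partial_V_loss_embed_notin\<close>)
  qed
qed

end
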